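(* Let $\Gamma$ be a finite undirected simple graph with vertices $x_1,\dots,x_n$ and edge set $E$, let $G_\Gamma$ be the associated group with commutator generators $y_1,\dots,y_N$ (notation as in the context). For any $z_1,\dots,z_n,t_1,\dots,t_N\in\mathbb{Z}$, \[h\Big(Z_{G_\Gamma}\Big(\prod_{i=1}^n x_i^{z_i}\prod_{l=1}^N y_l^{t_l}\Big)\Big)\le \min\Big\{n-1,\ \min_{\substack{i\in\{1,\dots,n\}\\ z_i\neq 0}}\deg(x_i)\Big\}+N+1,\] where $Z_{G_\Gamma}(g)$ is the centralizer of $g$, $h$ is the Hirsch number, and the inner minimum over an empty index set is interpreted as $+\infty$.
   Context: For a finite undirected simple graph $\Gamma$ with vertex set $\{x_1,\dots,x_n\}$ and edge set $E$, the group $G_\Gamma$ is defined by the presentation with generators $x_1,\dots,x_n$ and $y_{i,j}$ for each pair $i<j$ with $x_ix_j\notin E$, and relations $[x_j,x_i]=1$ if $x_ix_j\in E$; $[x_j,x_i]=y_{i,j}$ if $x_ix_j\notin E$ and $i<j$; and $[x_l,y_{i,j}]=1$ for all $l$ and all such $y_{i,j}$. Let $N$ be the number of pairs $i<j$ with $x_ix_j\notin E$, and enumerate the $y_{i,j}$ as $y_1,\dots,y_N$. Every element of $G_\Gamma$ is uniquely of the form $x_1^{z_1}\cdots x_n^{z_n}y_1^{t_1}\cdots y_N^{t_N}$. The Hirsch number $h(G)$ of a finitely generated nilpotent group $G$ is the number of infinite cyclic factors in any subnormal series of $G$ with cyclic factors. *)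

theory Defs
  imports "HOL-Algebra.Algebra"
begin

text \<open>The graph Gamma has vertex set {0..<n} (vertex i stands for x_(i+1)) and a
symmetric irreflexive edge relation E on it.\<close>

definition simple_graph :: "nat \<Rightarrow> (nat \<Rightarrow> nat \<Rightarrow> bool) \<Rightarrow> bool" where
  "simple_graph n E \<longleftrightarrow> (\<forall>i j. E i j \<longrightarrow> i < n \<and> j < n \<and> i \<noteq> j \<and> E j i)"

text \<open>Non-edges i<j: these index the generators y_(i,j).\<close>
definition nonedges :: "nat \<Rightarrow> (nat \<Rightarrow> nat \<Rightarrow> bool) \<Rightarrow> (nat \<times> nat) set" where
  "nonedges n E = {(i, j). i < j \<and> j < n \<and> \<not> E i j}"

definition vdeg :: "nat \<Rightarrow> (nat \<Rightarrow> nat \<Rightarrow> bool) \<Rightarrow> nat \<Rightarrow> nat" where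
  "vdeg n E i = card {j. j < n \<and> E i j}"

text \<open>Concrete model of G_Gamma via normal forms: the pair (z, t) represents
  x_1^z_1 ... x_n^z_n * prod y_(i,j)^t(i,j).  With the commutator convention
  [a,b] = a^-1 b^-1 a b, the relation [x_j,x_i] = y_(i,j) gives
  x_j x_i = x_i x_j y_(i,j), whence the multiplication below.\<close>

definition GG :: "nat \<Rightarrow> (nat \<Rightarrow> nat \<Rightarrow> bool)
     \<Rightarrow> ((nat \<Rightarrow> int) \<times> (nat \<times> nat \<Rightarrow> int)) monoid" where
  "GG n E = \<lparr> carrier = {(z, t). (\<forall>i. n \<le> i \<longrightarrow> z i = 0) \<and>
                                   (\<forall>p. p \<notin> nonedges n E \<longrightarrow> t p = 0)},
             monoid.mult = (\<lambda>a b.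
                 (\<lambda>i. fst a i + fst b i,
                  \<lambda>p. snd a p + snd b p +
                     (if p \<in> nonedges n E then fst a (snd p) * fst b (fst p) else 0))),
             one = (\<lambda>_. 0, \<lambda>_. 0) \<rparr>"

definition centralizer :: "('a, 'b) monoid_scheme \<Rightarrow> 'a \<Rightarrow> 'a set" where
  "centralizer G g = {h \<in> carrier G. h \<otimes>\<^bsub>G\<^esub> g = g \<otimes>\<^bsub>G\<^esub> h}"

definition cyclic_group :: "('a, 'b) monoid_scheme \<Rightarrow> bool" where
  "cyclic_group Q \<longleftrightarrow> (\<exists>a \<in> carrier Q. carrier Q = generate Q {a})"

definition cyclic_series ::
    "('a, 'b) monoid_scheme \<Rightarrow> 'a set \<Rightarrow> nat \<Rightarrow> (nat \<Rightarrow> 'a set) \<Rightarrow> bool" where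
  "cyclic_series G H k S \<longleftrightarrow>
     S 0 = H \<and> S k = {\<one>\<^bsub>G\<^esub>} \<and>
     (\<forall>i\<le>k. subgroup (S i) G) \<and>
     (\<forall>i<k. S (Suc i) \<subseteq> S i \<and>
            S (Suc i) \<lhd> (G\<lparr>carrier := S i\<rparr>) \<and>
            cyclic_group ((G\<lparr>carrier := S i\<rparr>) Mod S (Suc i)))"

definition num_infinite_factors ::
    "('a, 'b) monoid_scheme \<Rightarrow> nat \<Rightarrow> (nat \<Rightarrow> 'a set) \<Rightarrow> nat" where
  "num_infinite_factors G k S =
     card {i. i < k \<and> infinite (carrier ((G\<lparr>carrier := S i\<rparr>) Mod S (Suc i)))}"

end

theory Submission
  imports Defs
begin

(* The normal form gives every element of G_Gamma integer coordinates (z_1, ..., z_n, t_1, ..., t_N),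
  and each coordinate is additive on the subgroup of elements whose earlier coordinates vanish.
  Intersecting a subgroup H with this filtration yields a series with cyclic factors, each factor
  embedding into Z. Call a coordinate a pivot of H if some element of H has its first nonzero
  coordinate there.  In any series of H with cyclic factors, an infinite factor strictly shrinks the
  set of pivots: if the pivots of the next term K are those of H, coordinate elimination shows that
  every element of H has a positive power in K, so the cyclic factor H/K is finite.  Hence h(H) is at
  most the number of pivots.  For the centralizer of g = (z, t), commuting with g forces
  h_j z_i = h_i z_j for non-adjacent x_i, x_j; so if z_i is nonzero, only the first non-neighbour
  x_j of x_i with z_j nonzero can be a pivot among the non-neighbours.  This leaves at most
  min(n, deg x_i + 1) pivots among the x-coordinates and at most N among the y-coordinates. *)

lemma (in group) int_hom_image_principal:
  assumes "group_hom G integer_group f"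
  shows "\<exists>a\<in>carrier G. \<forall>h\<in>carrier G. f a dvd f h"
proof (cases "\<forall>h\<in>carrier G. f h = 0")
  case True
  then show ?thesis by (metis dvd_0_right one_closed)
next
  case False
  interpret f: group_hom G integer_group f by (rule assms)
  let ?pos = "\<lambda>d::nat. 0 < d \<and> int d \<in> f ` carrier G"
  have "\<exists>d. ?pos d"
  proof -
    obtain h where h: "h \<in> carrier G" "f h \<noteq> 0" using False by blast
    have "\<bar>f h\<bar> \<in> f ` carrier G"
    proof (cases "f h \<ge> 0")
      case True
      then show ?thesis using h(1) by (simp add: rev_image_eqI)
    next
      case False
      then have "\<bar>f h\<bar> = f (inv h)" using h(1) by simp
      then show ?thesis using h(1) by (metis inv_closed rev_image_eqI)
    qed
    then show ?thesis using h(2) by (intro exI[of _ "nat \<bar>f h\<bar>"]) simp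
  qed
  define d where "d = (LEAST d. ?pos d)"
  have d: "?pos d" unfolding d_def using \<open>\<exists>d. ?pos d\<close> by (rule LeastI_ex)
  then obtain a where a: "a \<in> carrier G" "f a = int d" by auto
  have dvd: "int d dvd f h" if h: "h \<in> carrier G" for h
  proof -
    let ?q = "f h div int d"
    let ?r = "f h mod int d"
    have r: "h \<otimes> inv (a [^] ?q) \<in> carrier G" using h a by simp
    have "f (h \<otimes> inv (a [^] ?q)) = f h - ?q * int d"
      using h a by (simp add: f.hom_int_pow)
    also have "\<dots> = ?r" by (simp add: minus_div_mult_eq_mod)
    finally have r_img: "?r \<in> f ` carrier G" using image_eqI r by metis
    have r_bounds: "0 \<le> ?r" "?r < int d" using d by simp_all
    have "\<not> ?pos (nat ?r)"
      using not_less_Least[of "nat ?r" ?pos] r_bounds unfolding d_def[symmetric] by linarith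
    moreover have "?pos (nat ?r)" if "?r \<noteq> 0"
    proof
      show "0 < nat ?r" using that r_bounds(1) by linarith
      have "int (nat ?r) = ?r" using r_bounds(1) by simp
      then show "int (nat ?r) \<in> f ` carrier G" using r_img by (rule ssubst)
    qed
    ultimately have "?r = 0" by blast
    then show ?thesis by auto
  qed
  show ?thesis
  proof (intro bexI ballI)
    fix h assume "h \<in> carrier G"
    then show "f a dvd f h" using dvd a(2) by simp
  qed (rule a(1))
qed

lemma (in group) int_hom_FactGroup_kernel_cyclic:
  assumes "group_hom G integer_group f"
  shows "cyclic_group (G Mod kernel G integer_group f)"
proof -
  interpret f: group_hom G integer_group f by (rule assms)
  define K where "K = kernel G integer_group f"
  interpret K: normal K G unfolding K_def by (rule f.normal_kernel)
  interpret Q: group "G Mod K" by (rule K.factorgroup_is_group)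
  obtain a where a: "a \<in> carrier G" "\<forall>h\<in>carrier G. f a dvd f h"
    using int_hom_image_principal[OF assms] by blast
  have aQ: "K #> a \<in> carrier (G Mod K)" using a(1) unfolding carrier_FactGroup by blast
  have "Y \<in> generate (G Mod K) {K #> a}" if "Y \<in> carrier (G Mod K)" for Y
  proof -
    from that obtain h where h: "Y = K #> h" "h \<in> carrier G"
      unfolding carrier_FactGroup by (rule imageE)
    obtain j where j: "f h = f a * j" using a h(2) by (auto elim: dvdE)
    have "f (h \<otimes> inv (a [^] j)) = 0" using a h(2) j by (simp add: f.hom_int_pow algebra_simps)
    then have "h \<otimes> inv (a [^] j) \<in> K" using a h(2) unfolding K_def kernel_def by simp
    then have "h \<in> K #> a [^] j" using a h(2) by (intro K.rcos_module_rev[OF is_group]) simp_all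
    then have "K #> h = K #> a [^] j"
      using a(1) by (intro repr_independence[symmetric] K.subgroup_axioms) simp_all
    also have "\<dots> = (K #> a) [^]\<^bsub>G Mod K\<^esub> j" using K.FactGroup_int_pow[OF a(1)] by simp
    finally show ?thesis using h(1) Q.generate_pow[OF aQ] by blast
  qed
  then have "carrier (G Mod K) = generate (G Mod K) {K #> a}"
    using Q.generate_incl aQ by blast
  then show ?thesis unfolding cyclic_group_def K_def[symmetric] using aQ by blast
qed

lemma (in group) cyclic_group_torsion_finite:
  assumes cyclic: "cyclic_group G"
    and torsion: "\<forall>x\<in>carrier G. \<exists>m::nat. 0 < m \<and> x [^] m = \<one>"
  shows "finite (carrier G)"
proof -
  obtain a where a: "a \<in> carrier G" "carrier G = generate G {a}"
    using cyclic unfolding cyclic_group_def by blast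
  obtain m :: nat where m: "0 < m" "a [^] m = \<one>" using torsion a(1) by blast
  have "carrier G \<subseteq> (\<lambda>k. a [^] k) ` {0..<int m}"
  proof
    fix x assume "x \<in> carrier G"
    then obtain k :: int where k: "x = a [^] k" using a generate_pow[OF a(1)] by auto
    have "a [^] k = a [^] (int m * (k div int m) + k mod int m)" by simp
    also have "\<dots> = a [^] (int m * (k div int m)) \<otimes> a [^] (k mod int m)"
      by (rule int_pow_mult[OF a(1)])
    also have "\<dots> = (a [^] int m) [^] (k div int m) \<otimes> a [^] (k mod int m)"
      by (simp add: int_pow_pow[OF a(1)])
    also have "\<dots> = a [^] (k mod int m)" using m a(1) by (simp add: int_pow_int)
    finally show "x \<in> (\<lambda>k. a [^] k) ` {0..<int m}" using k m(1) by auto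
  qed
  then show ?thesis by (rule finite_subset) simp
qed

lemma (in normal) FactGroup_finite_if_torsion:
  assumes cyclic: "cyclic_group (G Mod H)"
    and torsion: "\<forall>g\<in>carrier G. \<exists>m::nat. 0 < m \<and> g [^] m \<in> H"
  shows "finite (carrier (G Mod H))"
proof -
  interpret Q: group "G Mod H" by (rule factorgroup_is_group)
  show ?thesis
  proof (rule Q.cyclic_group_torsion_finite[OF cyclic], intro ballI)
    fix Y assume "Y \<in> carrier (G Mod H)"
    then obtain g where g: "Y = H #> g" "g \<in> carrier G"
      unfolding carrier_FactGroup by (rule imageE)
    obtain m :: nat where m: "0 < m" "g [^] m \<in> H" using torsion g(2) by blast
    have "Y [^]\<^bsub>G Mod H\<^esub> m = H #> g [^] m" using FactGroup_pow[OF g(2)] g(1) by simp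
    also have "\<dots> = H" using rcos_const[OF is_group m(2)] .
    finally show "\<exists>m::nat. 0 < m \<and> Y [^]\<^bsub>G Mod H\<^esub> m = \<one>\<^bsub>G Mod H\<^esub>" using m(1) by auto
  qed
qed

lemma (in normal) rcos_eq_self_iff:
  assumes "x \<in> carrier G"
  shows "H #> x = H \<longleftrightarrow> x \<in> H"
  using rcos_const[OF is_group] rcos_self[OF assms subgroup_axioms] by blast

lemma (in normal) pow_mult_mem_iff:
  assumes x: "x \<in> carrier G" and k: "k \<in> H"
  shows "(x \<otimes> k) [^] (m::nat) \<in> H \<longleftrightarrow> x [^] m \<in> H"
proof -
  have xk: "x \<otimes> k \<in> carrier G" using x k by simp
  have "x \<otimes> k \<in> H #> x" using coset_eq x k by (auto simp: l_coset_def)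
  then have "H #> (x \<otimes> k) = H #> x" using x by (intro repr_independence[symmetric] subgroup_axioms)
  then have "H #> (x \<otimes> k) [^] m = H #> x [^] m" using FactGroup_pow x xk by metis
  then show ?thesis using x xk by (simp add: rcos_eq_self_iff[symmetric])
qed

lemma card_strict_descents_add_le:
  fixes f :: "nat \<Rightarrow> nat"
  assumes "\<And>i. i < k \<Longrightarrow> f (Suc i) \<le> f i"
  shows "card {i. i < k \<and> f (Suc i) < f i} + f k \<le> f 0"
  using assms
proof (induction k)
  case 0
  then show ?case by simp
next
  case (Suc k)
  let ?D = "\<lambda>k. {i. i < k \<and> f (Suc i) < f i}"
  have IH: "card (?D k) + f k \<le> f 0" using Suc by simp
  have "?D (Suc k) = (if f (Suc k) < f k then insert k (?D k) else ?D k)" by (auto simp: less_Suc_eq)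
  then show ?case using IH Suc.prems[of k] by (simp add: card_insert_if)
qed

locale coordinatized_group = group G for G (structure) +
  fixes coord :: "nat \<Rightarrow> 'a \<Rightarrow> int" and dim :: nat
  assumes coord_mult: "\<lbrakk>a \<in> carrier G; b \<in> carrier G; \<forall>l<i. coord l a = 0\<rbrakk>
      \<Longrightarrow> coord i (a \<otimes> b) = coord i a + coord i b"
    and coords_zero_imp_one: "\<lbrakk>a \<in> carrier G; \<forall>l<dim. coord l a = 0\<rbrakk> \<Longrightarrow> a = \<one>"
begin

definition tail :: "nat \<Rightarrow> 'a set" where
  "tail i = {h \<in> carrier G. \<forall>l<i. coord l h = 0}"

definition pivots :: "'a set \<Rightarrow> nat set" where
  "pivots H = {i. i < dim \<and> (\<exists>h \<in> H \<inter> tail i. coord i h \<noteq> 0)}"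

lemma tail_0: "tail 0 = carrier G"
  by (simp add: tail_def)

lemma tail_Suc: "tail (Suc i) = {h \<in> tail i. coord i h = 0}"
  by (auto simp: tail_def less_Suc_eq)

lemma one_in_tail: "\<one> \<in> tail i"
proof (induction i)
  case 0
  then show ?case by (simp add: tail_0)
next
  case (Suc i)
  then have "coord i \<one> = coord i \<one> + coord i \<one>"
    using coord_mult[of \<one> \<one> i] by (simp add: tail_def)
  then show ?case using Suc by (simp add: tail_Suc)
qed

lemma tail_dim: "tail dim = {\<one>}"
  using coords_zero_imp_one one_in_tail by (auto simp: tail_def)

lemma group_hom_coord:
  assumes "subgroup H G" "H \<subseteq> tail i"
  shows "group_hom (G\<lparr>carrier := H\<rparr>) integer_group (coord i)"
  using assms subgroup.subgroup_is_group[OF assms(1) is_group] coord_mult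
  by (auto simp: group_hom_def group_hom_axioms_def hom_def tail_def subgroup.mem_carrier)

lemma Int_tail_Suc_eq_kernel:
  assumes "H \<subseteq> tail i"
  shows "H \<inter> tail (Suc i) = kernel (G\<lparr>carrier := H\<rparr>) integer_group (coord i)"
  using assms by (auto simp: kernel_def tail_Suc)

lemma subgroup_tail: "subgroup (tail i) G"
proof (induction i)
  case 0
  then show ?case by (simp add: tail_0 subgroup_self)
next
  case (Suc i)
  have "tail (Suc i) = kernel (G\<lparr>carrier := tail i\<rparr>) integer_group (coord i)"
    using Int_tail_Suc_eq_kernel[of "tail i" i] by (auto simp: tail_Suc)
  then show ?case
    using Suc group_hom.subgroup_kernel[OF group_hom_coord[OF Suc subset_refl]]
    by (simp add: incl_subgroup)
qed

lemma cyclic_series_tails: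
  assumes H: "subgroup H G"
  shows "cyclic_series G H dim (\<lambda>i. H \<inter> tail i)"
  unfolding cyclic_series_def
proof (intro conjI allI impI)
  show "H \<inter> tail 0 = H" using subgroup.subset[OF H] by (auto simp: tail_0)
  show "H \<inter> tail dim = {\<one>}" using subgroup.one_closed[OF H] by (auto simp: tail_dim)
  show "subgroup (H \<inter> tail i) G" for i by (rule subgroups_Inter_pair[OF H subgroup_tail])
  fix i
  let ?S = "G\<lparr>carrier := H \<inter> tail i\<rparr>"
  have hom: "group_hom ?S integer_group (coord i)"
    by (rule group_hom_coord) (auto intro: subgroups_Inter_pair[OF H subgroup_tail])
  have kernel: "H \<inter> tail (Suc i) = kernel ?S integer_group (coord i)"
    using Int_tail_Suc_eq_kernel[of "H \<inter> tail i" i] by (auto simp: tail_Suc)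
  show "H \<inter> tail (Suc i) \<subseteq> H \<inter> tail i" by (auto simp: tail_Suc)
  show "H \<inter> tail (Suc i) \<lhd> ?S" unfolding kernel by (rule group_hom.normal_kernel[OF hom])
  show "cyclic_group (?S Mod H \<inter> tail (Suc i))"
    unfolding kernel using group.int_hom_FactGroup_kernel_cyclic[OF group_hom.axioms(1)[OF hom] hom] .
qed

lemma pivots_mono: "H \<subseteq> K \<Longrightarrow> pivots H \<subseteq> pivots K"
  by (auto simp: pivots_def)

lemma pivots_subset: "pivots H \<subseteq> {..<dim}"
  by (auto simp: pivots_def)

lemma finite_pivots: "finite (pivots H)"
  using pivots_subset by (rule finite_subset) simp

lemma card_pivots_le:
  assumes "m \<le> dim"
  shows "card (pivots H) \<le> card (pivots H \<inter> {..<m}) + (dim - m)"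
proof -
  have "pivots H \<subseteq> (pivots H \<inter> {..<m}) \<union> {m..<dim}" using pivots_subset[of H] by auto
  then have "card (pivots H) \<le> card ((pivots H \<inter> {..<m}) \<union> {m..<dim})" by (intro card_mono) auto
  also have "\<dots> \<le> card (pivots H \<inter> {..<m}) + (dim - m)"
    using card_Un_le[of "pivots H \<inter> {..<m}" "{m..<dim}"] by simp
  finally show ?thesis .
qed

lemma coord_int_pow:
  assumes "x \<in> tail i"
  shows "coord i (x [^] (j::int)) = j * coord i x"
proof -
  interpret c: group_hom "G\<lparr>carrier := tail i\<rparr>" integer_group "coord i"
    by (rule group_hom_coord[OF subgroup_tail subset_refl])
  show ?thesis using c.hom_int_pow[of x j] assms int_pow_consistent[OF subgroup_tail assms] by simp
qed

lemma pivot_clears_coord: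
  assumes K: "subgroup K G" and i: "i \<in> pivots K" and g: "g \<in> tail i"
  shows "\<exists>a::nat. 0 < a \<and> (\<exists>k\<in>K. g [^] a \<otimes> k \<in> tail (Suc i))"
proof -
  obtain k where k: "k \<in> K" "k \<in> tail i" "coord i k \<noteq> 0" using i by (auto simp: pivots_def)
  define a where "a = nat \<bar>coord i k\<bar>"
  define k' where "k' = k [^] (- coord i g * sgn (coord i k))"
  have k': "k' \<in> K" "k' \<in> tail i"
    unfolding k'_def using k subgroup_int_pow_closed[OF K] subgroup_int_pow_closed[OF subgroup_tail]
    by auto
  have ga: "g [^] a = g [^] int a" by (simp add: int_pow_int)
  have ga_tail: "g [^] a \<in> tail i" unfolding ga using subgroup_int_pow_closed[OF subgroup_tail g] .
  have "coord i (g [^] a \<otimes> k') = coord i (g [^] a) + coord i k'"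
    using ga_tail k'(2) by (intro coord_mult) (auto simp: tail_def)
  also have "\<dots> = \<bar>coord i k\<bar> * coord i g - coord i g * (sgn (coord i k) * coord i k)"
    unfolding ga k'_def using g k(2) by (simp add: coord_int_pow a_def)
  also have "\<dots> = 0" by (simp add: abs_if sgn_if)
  finally have "g [^] a \<otimes> k' \<in> tail (Suc i)"
    using ga_tail k'(2) subgroup.m_closed[OF subgroup_tail] by (simp add: tail_Suc)
  moreover have "0 < a" using k(3) by (simp add: a_def)
  ultimately show ?thesis using k'(1) by blast
qed

lemma power_mem_if_pivots_eq:
  assumes H: "subgroup H G" and K: "subgroup K G" and KH: "K \<subseteq> H"
    and normal: "K \<lhd> G\<lparr>carrier := H\<rparr>" and eq: "pivots K = pivots H" and g: "g \<in> H"
  shows "\<exists>m::nat. 0 < m \<and> g [^] m \<in> K"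
proof -
  have "\<forall>g\<in>H \<inter> tail i. \<exists>m::nat. 0 < m \<and> g [^] m \<in> K" if "i \<le> dim" for i
    using that
  proof (induction i rule: inc_induct)
    case base
    show ?case using subgroup.one_closed[OF K] by (auto simp: tail_dim intro: exI[of _ 1])
  next
    case (step i)
    show ?case
    proof
      fix g assume g: "g \<in> H \<inter> tail i"
      show "\<exists>m::nat. 0 < m \<and> g [^] m \<in> K"
      proof (cases "coord i g = 0")
        case True
        then show ?thesis using g step.IH by (auto simp: tail_Suc)
      next
        case False
        then have "i \<in> pivots K" using eq g step.hyps by (auto simp: pivots_def)
        then obtain a :: nat and k where a: "0 < a" "k \<in> K" "g [^] a \<otimes> k \<in> tail (Suc i)"
          using pivot_clears_coord[OF K _ IntD2[OF g]] by blast
        have ga: "g [^] a \<in> H"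
          using g subgroup_int_pow_closed[OF H, of g "int a"] by (simp add: int_pow_int)
        then have "g [^] a \<otimes> k \<in> H" using a(2) KH subgroup.m_closed[OF H] by blast
        then obtain m :: nat where m: "0 < m" "(g [^] a \<otimes> k) [^] m \<in> K"
          using a(3) step.IH by blast
        have "(g [^] a) [^] m \<in> K"
          using normal.pow_mult_mem_iff[OF normal, of "g [^] a" k m] ga a(2) m(2)
          by (simp add: nat_pow_consistent[symmetric])
        then have "g [^] (a * m) \<in> K" using g subgroup.mem_carrier[OF H] by (simp add: nat_pow_pow)
        then show ?thesis using a(1) m(1) by (intro exI[of _ "a * m"]) simp
      qed
    qed
  qed
  from this[of 0] show ?thesis using g subgroup.subset[OF H] by (auto simp: tail_0)
qed

lemma pivots_psubset_if_infinite_factor: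
  assumes H: "subgroup H G" and K: "subgroup K G" and KH: "K \<subseteq> H"
    and normal: "K \<lhd> G\<lparr>carrier := H\<rparr>" and cyclic: "cyclic_group (G\<lparr>carrier := H\<rparr> Mod K)"
    and infinite: "infinite (carrier (G\<lparr>carrier := H\<rparr> Mod K))"
  shows "pivots K \<subset> pivots H"
proof -
  have "pivots K \<noteq> pivots H"
  proof
    assume "pivots K = pivots H"
    then have "\<forall>g\<in>carrier (G\<lparr>carrier := H\<rparr>).
        \<exists>m::nat. 0 < m \<and> g [^]\<^bsub>G\<lparr>carrier := H\<rparr>\<^esub> m \<in> K"
      using power_mem_if_pivots_eq[OF H K KH normal] by (simp add: nat_pow_consistent[symmetric])
    then show False using normal.FactGroup_finite_if_torsion[OF normal cyclic] infinite by blast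
  qed
  then show ?thesis using pivots_mono[OF KH] by blast
qed

lemma num_infinite_factors_le_card_pivots:
  assumes series: "cyclic_series G C k S"
  shows "num_infinite_factors G k S \<le> card (pivots C)"
proof -
  let ?p = "\<lambda>i. card (pivots (S i))"
  let ?infinite = "\<lambda>i. infinite (carrier (G\<lparr>carrier := S i\<rparr> Mod S (Suc i)))"
  have S: "S 0 = C" "\<And>i. i \<le> k \<Longrightarrow> subgroup (S i) G"
    "\<And>i. i < k \<Longrightarrow> S (Suc i) \<subseteq> S i \<and> S (Suc i) \<lhd> G\<lparr>carrier := S i\<rparr> \<and>
       cyclic_group (G\<lparr>carrier := S i\<rparr> Mod S (Suc i))"
    using series unfolding cyclic_series_def by auto
  have mono: "?p (Suc i) \<le> ?p i" if "i < k" for i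
    using S(3)[OF that] by (intro card_mono finite_pivots pivots_mono) blast
  have "?p (Suc i) < ?p i" if "i < k" "?infinite i" for i
    using S(2)[of i] S(2)[of "Suc i"] S(3)[OF that(1)] that
    by (intro psubset_card_mono finite_pivots pivots_psubset_if_infinite_factor) auto
  then have "{i. i < k \<and> ?infinite i} \<subseteq> {i. i < k \<and> ?p (Suc i) < ?p i}" by blast
  then have "num_infinite_factors G k S \<le> card {i. i < k \<and> ?p (Suc i) < ?p i}"
    unfolding num_infinite_factors_def by (intro card_mono) auto
  also have "\<dots> \<le> ?p 0" using card_strict_descents_add_le[of k ?p, OF mono] by linarith
  finally show ?thesis using S(1) by simp
qed

end

definition nonedge_list :: "nat \<Rightarrow> (nat \<Rightarrow> nat \<Rightarrow> bool) \<Rightarrow> (nat \<times> nat) list" where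
  "nonedge_list n E = (SOME l. set l = nonedges n E \<and> distinct l)"

definition GG_coord ::
    "nat \<Rightarrow> (nat \<Rightarrow> nat \<Rightarrow> bool) \<Rightarrow> nat \<Rightarrow> (nat \<Rightarrow> int) \<times> (nat \<times> nat \<Rightarrow> int) \<Rightarrow> int" where
  "GG_coord n E i h = (if i < n then fst h i else snd h (nonedge_list n E ! (i - n)))"

lemma finite_nonedges: "finite (nonedges n E)"
  by (rule finite_subset[of _ "{..<n} \<times> {..<n}"]) (auto simp: nonedges_def)

lemma nonedge_list: "set (nonedge_list n E) = nonedges n E" "distinct (nonedge_list n E)"
  unfolding nonedge_list_def
  using someI_ex[OF finite_distinct_list[OF finite_nonedges]] by blast+

lemma length_nonedge_list: "length (nonedge_list n E) = card (nonedges n E)"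
  using nonedge_list distinct_card by metis

lemma carrier_GG_iff: "h \<in> carrier (GG n E) \<longleftrightarrow>
    (\<forall>i. n \<le> i \<longrightarrow> fst h i = 0) \<and> (\<forall>p. p \<notin> nonedges n E \<longrightarrow> snd h p = 0)"
  by (cases h) (simp add: GG_def)

lemma mult_GG: "a \<otimes>\<^bsub>GG n E\<^esub> b = (\<lambda>i. fst a i + fst b i,
    \<lambda>p. snd a p + snd b p + (if p \<in> nonedges n E then fst a (snd p) * fst b (fst p) else 0))"
  by (simp add: GG_def)

lemma one_GG: "\<one>\<^bsub>GG n E\<^esub> = (\<lambda>_. 0, \<lambda>_. 0)"
  by (simp add: GG_def)

lemma group_GG: "group (GG n E)"
proof (rule groupI)
  fix x y assume "x \<in> carrier (GG n E)" "y \<in> carrier (GG n E)"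
  then show "x \<otimes>\<^bsub>GG n E\<^esub> y \<in> carrier (GG n E)" by (simp add: carrier_GG_iff mult_GG)
next
  show "\<one>\<^bsub>GG n E\<^esub> \<in> carrier (GG n E)" by (simp add: carrier_GG_iff one_GG)
next
  fix x y z
  show "x \<otimes>\<^bsub>GG n E\<^esub> y \<otimes>\<^bsub>GG n E\<^esub> z = x \<otimes>\<^bsub>GG n E\<^esub> (y \<otimes>\<^bsub>GG n E\<^esub> z)"
    by (auto simp: mult_GG fun_eq_iff algebra_simps)
next
  fix x assume "x \<in> carrier (GG n E)"
  then show "\<one>\<^bsub>GG n E\<^esub> \<otimes>\<^bsub>GG n E\<^esub> x = x" by (cases x) (auto simp: mult_GG one_GG)
next
  fix x assume x: "x \<in> carrier (GG n E)"
  obtain z t where zt: "x = (z, t)" by (cases x)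
  define y where
    "y = (\<lambda>i. - z i, \<lambda>p. - t p + (if p \<in> nonedges n E then z (snd p) * z (fst p) else 0))"
  have "y \<in> carrier (GG n E)" using x unfolding zt y_def by (simp add: carrier_GG_iff)
  moreover have "y \<otimes>\<^bsub>GG n E\<^esub> x = \<one>\<^bsub>GG n E\<^esub>"
    unfolding zt y_def by (auto simp: mult_GG one_GG fun_eq_iff)
  ultimately show "\<exists>y\<in>carrier (GG n E). y \<otimes>\<^bsub>GG n E\<^esub> x = \<one>\<^bsub>GG n E\<^esub>" by blast
qed

lemma fst_eq_0_if_vertex_coords_0:
  assumes "a \<in> carrier (GG n E)" "\<forall>l<n. GG_coord n E l a = 0"
  shows "fst a = (\<lambda>_. 0)"
proof
  fix j
  show "fst a j = 0" using assms by (cases "j < n") (auto simp: carrier_GG_iff GG_coord_def)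
qed

lemma coordinatized_group_GG:
  "coordinatized_group (GG n E) (GG_coord n E) (n + card (nonedges n E))"
proof (rule coordinatized_group.intro[OF group_GG], unfold_locales)
  fix a b i
  assume a: "a \<in> carrier (GG n E)" and "\<forall>l<i. GG_coord n E l a = 0"
  then have "\<not> i < n \<Longrightarrow> fst a = (\<lambda>_. 0)" by (intro fst_eq_0_if_vertex_coords_0) auto
  then show "GG_coord n E i (a \<otimes>\<^bsub>GG n E\<^esub> b) = GG_coord n E i a + GG_coord n E i b"
    by (cases "i < n") (auto simp: GG_coord_def mult_GG)
next
  fix a assume a: "a \<in> carrier (GG n E)"
    and zero: "\<forall>l<n + card (nonedges n E). GG_coord n E l a = 0"
  have "fst a = (\<lambda>_. 0)" using a zero by (intro fst_eq_0_if_vertex_coords_0) auto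
  moreover have "snd a p = 0" for p
  proof (cases "p \<in> nonedges n E")
    case True
    then obtain j where j: "j < card (nonedges n E)" "nonedge_list n E ! j = p"
      using nonedge_list(1) length_nonedge_list by (metis in_set_conv_nth)
    then show ?thesis using zero[rule_format, of "n + j"] by (simp add: GG_coord_def)
  next
    case False
    then show ?thesis using a unfolding carrier_GG_iff by blast
  qed
  ultimately show "a = \<one>\<^bsub>GG n E\<^esub>" by (cases a) (auto simp: one_GG)
qed

interpretation GG: coordinatized_group "GG n E" "GG_coord n E" "n + card (nonedges n E)" for n E
  by (rule coordinatized_group_GG)

lemma (in group) subgroup_centralizer:
  assumes g: "g \<in> carrier G"
  shows "subgroup (centralizer G g) G"
proof (rule subgroupI)
  show "centralizer G g \<subseteq> carrier G" "centralizer G g \<noteq> {}"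
    using g by (auto simp: centralizer_def)
next
  fix h assume "h \<in> centralizer G g"
  then have h: "h \<in> carrier G" "h \<otimes> g = g \<otimes> h" by (auto simp: centralizer_def)
  have "g \<otimes> inv h = inv h \<otimes> (h \<otimes> g) \<otimes> inv h" using g h(1) by (simp add: m_assoc[symmetric])
  also have "\<dots> = inv h \<otimes> g" using g h by (simp add: m_assoc)
  finally show "inv h \<in> centralizer G g" using h(1) by (simp add: centralizer_def)
next
  fix a b assume "a \<in> centralizer G g" "b \<in> centralizer G g"
  then have a: "a \<in> carrier G" "a \<otimes> g = g \<otimes> a" and b: "b \<in> carrier G" "b \<otimes> g = g \<otimes> b"
    by (auto simp: centralizer_def)
  have "a \<otimes> b \<otimes> g = a \<otimes> (g \<otimes> b)" using a(1) b g by (simp add: m_assoc)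
  also have "\<dots> = g \<otimes> (a \<otimes> b)" using a b(1) g by (simp add: m_assoc[symmetric])
  finally show "a \<otimes> b \<in> centralizer G g" using a(1) b(1) by (simp add: centralizer_def)
qed

lemma centralizer_GG_relation:
  assumes sg: "simple_graph n E" and h: "h \<in> centralizer (GG n E) (z, t)"
    and i: "i < n" and j: "j < n" and ij: "\<not> E i j"
  shows "fst h j * z i = z j * fst h i"
proof -
  have comm: "snd (h \<otimes>\<^bsub>GG n E\<^esub> (z, t)) p = snd ((z, t) \<otimes>\<^bsub>GG n E\<^esub> h) p" for p
    using h by (simp add: centralizer_def)
  consider "j = i" | "i < j" | "j < i" by linarith
  then show ?thesis
  proof cases
    case 1
    then show ?thesis by simp
  next
    case 2
    then have "(i, j) \<in> nonedges n E" using j ij by (simp add: nonedges_def)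
    then show ?thesis using comm[of "(i, j)"] by (simp add: mult_GG)
  next
    case 3
    have "\<not> E j i" using ij sg by (auto simp: simple_graph_def)
    then have "(j, i) \<in> nonedges n E" using 3 i by (simp add: nonedges_def)
    then show ?thesis using comm[of "(j, i)"] by (simp add: mult_GG algebra_simps)
  qed
qed

lemma nonadjacent_pivot_centralizer_GG:
  assumes sg: "simple_graph n E" and i0: "i0 < n" "z i0 \<noteq> 0"
    and i: "i \<in> GG.pivots n E (centralizer (GG n E) (z, t))" "i < n" "\<not> E i0 i"
  shows "i = (LEAST j. j < n \<and> \<not> E i0 j \<and> z j \<noteq> 0)"
proof -
  obtain h where h: "h \<in> centralizer (GG n E) (z, t)" "h \<in> GG.tail n E i" "fst h i \<noteq> 0"
    using i by (auto simp: GG.pivots_def GG_coord_def)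
  have rel: "fst h j * z i0 = z j * fst h i0" if "j < n" "\<not> E i0 j" for j
    using centralizer_GG_relation[OF sg h(1) i0(1) that] .
  have "z i \<noteq> 0" "fst h i0 \<noteq> 0" using rel[OF i(2,3)] h(3) i0(2) by auto
  moreover have "i \<le> j" if "j < n" "\<not> E i0 j" "z j \<noteq> 0" for j
  proof (rule ccontr)
    assume "\<not> i \<le> j"
    then have "GG_coord n E j h = 0" using h(2) by (simp add: GG.tail_def)
    then have "fst h j = 0" using that(1) by (simp add: GG_coord_def)
    then show False using rel[OF that(1,2)] that(3) \<open>fst h i0 \<noteq> 0\<close> by simp
  qed
  ultimately show ?thesis using i(2,3) by (intro Least_equality[symmetric]) auto
qed

lemma card_vertex_pivots_centralizer_GG_le:
  assumes sg: "simple_graph n E" and i0: "i0 < n" "z i0 \<noteq> 0"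
  shows "card (GG.pivots n E (centralizer (GG n E) (z, t)) \<inter> {..<n}) \<le> vdeg n E i0 + 1"
proof -
  let ?m = "LEAST j. j < n \<and> \<not> E i0 j \<and> z j \<noteq> 0"
  have "GG.pivots n E (centralizer (GG n E) (z, t)) \<inter> {..<n} \<subseteq> insert ?m {j. j < n \<and> E i0 j}"
    using nonadjacent_pivot_centralizer_GG[of n E i0 z, OF sg i0] by blast
  then have "card (GG.pivots n E (centralizer (GG n E) (z, t)) \<inter> {..<n})
      \<le> card (insert ?m {j. j < n \<and> E i0 j})" by (intro card_mono) auto
  also have "\<dots> \<le> vdeg n E i0 + 1" unfolding vdeg_def by (simp add: card_insert_if)
  finally show ?thesis .
qed

theorem lemma4p2:
  fixes n :: nat and E :: "nat \<Rightarrow> nat \<Rightarrow> bool"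
    and z :: "nat \<Rightarrow> int" and t :: "nat \<times> nat \<Rightarrow> int"
  assumes "simple_graph n E"
    and "\<forall>i. n \<le> i \<longrightarrow> z i = 0"
    and "\<forall>p. p \<notin> nonedges n E \<longrightarrow> t p = 0"
  shows "(\<exists>k S. cyclic_series (GG n E) (centralizer (GG n E) (z, t)) k S) \<and>
         (\<forall>k S. cyclic_series (GG n E) (centralizer (GG n E) (z, t)) k S \<longrightarrow>
            int (num_infinite_factors (GG n E) k S)
              \<le> (if {i. i < n \<and> z i \<noteq> 0} = {} then int n - 1
                 else min (int n - 1) (int (Min (vdeg n E ` {i. i < n \<and> z i \<noteq> 0}))))
                + int (card (nonedges n E)) + 1)"
proof (intro conjI allI impI)
  let ?C = "centralizer (GG n E) (z, t)"
  have "(z, t) \<in> carrier (GG n E)" using assms(2,3) by (simp add: carrier_GG_iff)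
  then have C: "subgroup ?C (GG n E)" by (rule group.subgroup_centralizer[OF group_GG])
  show "\<exists>k S. cyclic_series (GG n E) ?C k S" using GG.cyclic_series_tails[OF C] by blast
  fix k S assume series: "cyclic_series (GG n E) ?C k S"
  let ?a = "card (GG.pivots n E ?C \<inter> {..<n})"
  let ?V = "vdeg n E ` {i. i < n \<and> z i \<noteq> 0}"
  have num: "num_infinite_factors (GG n E) k S \<le> ?a + card (nonedges n E)"
    using GG.num_infinite_factors_le_card_pivots[OF series] GG.card_pivots_le[of n n E ?C] by simp
  have a_n: "?a \<le> n" using card_mono[of "{..<n}"] by simp
  show "int (num_infinite_factors (GG n E) k S)
      \<le> (if {i. i < n \<and> z i \<noteq> 0} = {} then int n - 1 else min (int n - 1) (int (Min ?V)))
        + int (card (nonedges n E)) + 1"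
  proof (cases "{i. i < n \<and> z i \<noteq> 0} = {}")
    case True
    then show ?thesis using num a_n by simp
  next
    case False
    then have "Min ?V \<in> ?V" by (intro Min_in) auto
    then obtain i where "i < n" "z i \<noteq> 0" "Min ?V = vdeg n E i" by auto
    then have "?a \<le> Min ?V + 1" using card_vertex_pivots_centralizer_GG_le[OF assms(1)] by simp
    then show ?thesis using False num a_n by (simp add: min_def)
  qed
qed

end
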